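(* Let $\mathcal{A}$ be a finite set, $B\ge0$ an integer, $\mathfrak{F}:\mathcal{A}^{\mathbb{Z}}\to\mathcal{A}^{\mathbb{Z}}$ a cellular automaton with neighbourhood $\{-B,\dots,B\}$, and $\phi:\mathcal{A}\to\mathbb{N}$ conserved by $\mathfrak{F}$. Let $\mathbf{a}\in\mathcal{A}^{<\mathbb{Z}}$ and $\mathbf{a}'=\mathfrak{F}(\mathbf{a})$. Then: (1) for every $\mathsf{z}\in\mathbb{Z}$, $\overset{\leftrightarrow}{I}_{\mathsf{z}}(\mathbf{a})=-\big(\phi(a'_{\mathsf{z}})-\phi(a_{\mathsf{z}})\big)$; (2) for every $\mathsf{z}$, $\vec{I}_{\mathsf{z}}(\mathbf{a})$ depends only on $\mathbf{a}|_{\{\mathsf{z}-B,\dots,\mathsf{z}+B\}}$, i.e. if $\mathbf{b}\in\mathcal{A}^{<\mathbb{Z}}$ satisfies $b_{\mathsf{y}}=a_{\mathsf{y}}$ for all $\mathsf{y}\in\{\mathsf{z}-B,\dots,\mathsf{z}+B\}$ then $\vec{I}_{\mathsf{z}}(\mathbf{b})=\vec{I}_{\mathsf{z}}(\mathbf{a})$; (3) for every $\mathsf{z}$: (i) $\vec{I}_{\mathsf{z}}(\mathbf{a})\le\sum_{\mathsf{y}=\mathsf{z}-B}^{\mathsf{z}}\phi(a_{\mathsf{y}})$; (ii) $\vec{I}_{\mathsf{z}}(\mathbf{a})\le\sum_{\mathsf{y}=\mathsf{z}}^{\mathsf{z}+B}\phi(a'_{\mathsf{y}})$; (iii) $\overset{\leftharpoonup}{I}_{\mathsf{z}}(\mathbf{a})\le\sum_{\mathsf{y}=\mathsf{z}}^{\mathsf{z}+B}\phi(a_{\mathsf{y}})$;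 (iv) $\overset{\leftharpoonup}{I}_{\mathsf{z}}(\mathbf{a})\le\sum_{\mathsf{y}=\mathsf{z}-B}^{\mathsf{z}}\phi(a'_{\mathsf{y}})$.
   Context: The CA is $\mathfrak{F}(\mathbf{a})_{\mathsf{z}}=\mathfrak{f}(a_{\mathsf{z}-B},\dots,a_{\mathsf{z}+B})$. Vacuum states are $\phi^{-1}\{0\}$; $\mathcal{A}^{<\mathbb{Z}}$ is the set of configurations with only finitely many non-vacuum sites; $\phi$ is conserved by $\mathfrak{F}$ if for every $\mathbf{a}\in\mathcal{A}^{<\mathbb{Z}}$, $\mathfrak{F}(\mathbf{a})\in\mathcal{A}^{<\mathbb{Z}}$ and $\sum_{\mathsf{z}}\phi(\mathfrak{F}(\mathbf{a})_{\mathsf{z}})=\sum_{\mathsf{z}}\phi(a_{\mathsf{z}})$. Flux: for $\mathbf{a}\in\mathcal{A}^{<\mathbb{Z}}$, $\mathbf{a}'=\mathfrak{F}(\mathbf{a})$, $\vec{I}_{\mathsf{z}}(\mathbf{a})=\sum_{\mathsf{y}\le\mathsf{z}}\phi(a_{\mathsf{y}})-\sum_{\mathsf{y}\le\mathsf{z}}\phi(a'_{\mathsf{y}})$ (which by conservation also equals $\sum_{\mathsf{y}>\mathsf{z}}\phi(a'_{\mathsf{y}})-\sum_{\mathsf{y}>\mathsf{z}}\phi(a_{\mathsf{y}})$); $\overset{\leftharpoonup}{I}_{\mathsf{z}}(\mathbf{a})=-\vec{I}_{\mathsf{z}-1}(\mathbf{a})$; $\overset{\leftrightarrow}{I}_{\mathsf{z}}(\mathbf{a})=\overset{\leftharpoonup}{I}_{\mathsf{z}}(\mathbf{a})+\vec{I}_{\mathsf{z}}(\mathbf{a})$.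 *)

theory Defs
  imports Main
begin

definition CA :: "nat \<Rightarrow> ('a list \<Rightarrow> 'a) \<Rightarrow> (int \<Rightarrow> 'a) \<Rightarrow> (int \<Rightarrow> 'a)" where
  "CA B f a = (\<lambda>z. f (map (\<lambda>i. a (z + i)) [- int B .. int B]))"

text \<open>Configurations with finitely many non-vacuum sites (vacuum = phi-value 0).\<close>
definition fin_conf :: "('a \<Rightarrow> nat) \<Rightarrow> (int \<Rightarrow> 'a) \<Rightarrow> bool" where
  "fin_conf phi a \<longleftrightarrow> finite {z. phi (a z) \<noteq> 0}"

definition total :: "('a \<Rightarrow> nat) \<Rightarrow> (int \<Rightarrow> 'a) \<Rightarrow> nat" where
  "total phi a = (\<Sum>y \<in> {y. phi (a y) \<noteq> 0}. phi (a y))"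

definition psum_le :: "('a \<Rightarrow> nat) \<Rightarrow> (int \<Rightarrow> 'a) \<Rightarrow> int \<Rightarrow> nat" where
  "psum_le phi a z = (\<Sum>y \<in> {y. y \<le> z \<and> phi (a y) \<noteq> 0}. phi (a y))"

definition conserved :: "nat \<Rightarrow> ('a list \<Rightarrow> 'a) \<Rightarrow> ('a \<Rightarrow> nat) \<Rightarrow> bool" where
  "conserved B f phi \<longleftrightarrow>
     (\<forall>a. fin_conf phi a \<longrightarrow> fin_conf phi (CA B f a) \<and> total phi (CA B f a) = total phi a)"

definition flux_r :: "nat \<Rightarrow> ('a list \<Rightarrow> 'a) \<Rightarrow> ('a \<Rightarrow> nat) \<Rightarrow> (int \<Rightarrow> 'a) \<Rightarrow> int \<Rightarrow> int" where
  "flux_r B f phi a z = int (psum_le phi a z) - int (psum_le phi (CA B f a) z)"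

definition flux_l :: "nat \<Rightarrow> ('a list \<Rightarrow> 'a) \<Rightarrow> ('a \<Rightarrow> nat) \<Rightarrow> (int \<Rightarrow> 'a) \<Rightarrow> int \<Rightarrow> int" where
  "flux_l B f phi a z = - flux_r B f phi a (z - 1)"

definition flux_lr :: "nat \<Rightarrow> ('a list \<Rightarrow> 'a) \<Rightarrow> ('a \<Rightarrow> nat) \<Rightarrow> (int \<Rightarrow> 'a) \<Rightarrow> int \<Rightarrow> int" where
  "flux_lr B f phi a z = flux_l B f phi a z + flux_r B f phi a z"

end

theory Submission
  imports Defs
begin

text \<open>By conservation, the rightward flux across the bond between z and z+1 is both the
  charge lost by the half-line left of the bond and the charge gained by the half-line right
  of it. Since the automaton has radius B, the first expression only sees the configuration
  up to z+B and the second only from z-B on; gluing two configurations that agree on the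
  window shows that the flux is local. For the bounds, truncate the configuration to vacuum
  outside a half-line, which does not change the flux, and drop a nonnegative term. For the
  bounds in terms of a', conservation for a truncated configuration shows that charge lying
  more than B sites beyond the bond after one step is bounded by the charge that was
  already beyond the bond before.\<close>

definition charge :: "('a \<Rightarrow> nat) \<Rightarrow> (int \<Rightarrow> 'a) \<Rightarrow> int set \<Rightarrow> nat" where
  "charge phi a S = (\<Sum>y \<in> {y \<in> S. phi (a y) \<noteq> 0}. phi (a y))"

lemma psum_le_eq_charge: "psum_le phi a z = charge phi a {..z}"
  by (simp add: psum_le_def charge_def)

lemma total_eq_charge: "total phi a = charge phi a UNIV"
  by (simp add: total_def charge_def)

lemma charge_finite:
  assumes "finite S"
  shows "charge phi a S = (\<Sum>y \<in> S. phi (a y))"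
  unfolding charge_def by (rule sum.mono_neutral_left) (use assms in auto)

lemma charge_cong:
  assumes "\<And>y. y \<in> S \<Longrightarrow> a y = b y"
  shows "charge phi a S = charge phi b S"
proof -
  have "{y \<in> S. phi (a y) \<noteq> 0} = {y \<in> S. phi (b y) \<noteq> 0}" using assms by auto
  then show ?thesis unfolding charge_def by (intro sum.cong) (auto simp: assms)
qed

lemma charge_eq_Int_if_vacuum:
  assumes "\<And>y. y \<in> S - T \<Longrightarrow> phi (a y) = 0"
  shows "charge phi a S = charge phi a (S \<inter> T)"
proof -
  have "{y \<in> S. phi (a y) \<noteq> 0} = {y \<in> S \<inter> T. phi (a y) \<noteq> 0}" using assms by force
  then show ?thesis unfolding charge_def by (simp only:)
qed

lemma charge_split:
  assumes "fin_conf phi a"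
  shows "charge phi a S = charge phi a (S \<inter> T) + charge phi a (S - T)"
proof -
  have fin: "finite {y \<in> S'. phi (a y) \<noteq> 0}" for S'
    using assms by (auto simp: fin_conf_def intro: finite_subset)
  have "{y \<in> S. phi (a y) \<noteq> 0}
      = {y \<in> S \<inter> T. phi (a y) \<noteq> 0} \<union> {y \<in> S - T. phi (a y) \<noteq> 0}"
    by auto
  then show ?thesis unfolding charge_def by (simp only:) (rule sum.union_disjoint; use fin in blast)
qed

lemma charge_mono:
  assumes "fin_conf phi a" and "S \<subseteq> T"
  shows "charge phi a S \<le> charge phi a T"
  using charge_split[OF assms(1), of T S] assms(2) by (simp add: Int_absorb1)

lemma total_eq_charge_atMost_greaterThan:
  assumes "fin_conf phi a"
  shows "total phi a = charge phi a {..z} + charge phi a {z<..}"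
proof -
  have "UNIV - {..z} = {z<..}" by auto
  then show ?thesis using charge_split[OF assms, of UNIV "{..z}"] by (simp add: total_eq_charge)
qed

lemma charge_atMost_split:
  assumes "fin_conf phi a" and "w \<le> z"
  shows "charge phi a {..z} = charge phi a {..w} + charge phi a {w<..z}"
proof -
  have "{..z} \<inter> {..w} = {..w}" "{..z} - {..w} = {w<..z}" using assms(2) by auto
  then show ?thesis using charge_split[OF assms(1), of "{..z}" "{..w}"] by simp
qed

lemma charge_greaterThan_split:
  assumes "fin_conf phi a" and "z \<le> w"
  shows "charge phi a {z<..} = charge phi a {z<..w} + charge phi a {w<..}"
proof -
  have "{z<..} \<inter> {..w} = {z<..w}" "{z<..} - {..w} = {w<..}" using assms(2) by auto
  then show ?thesis using charge_split[OF assms(1), of "{z<..}" "{..w}"] by simp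
qed

lemma fin_conf_patch:
  assumes "fin_conf phi a" and "fin_conf phi b"
  shows "fin_conf phi (\<lambda>y. if y \<in> S then a y else b y)"
proof -
  have "{y. phi (if y \<in> S then a y else b y) \<noteq> 0} \<subseteq> {y. phi (a y) \<noteq> 0} \<union> {y. phi (b y) \<noteq> 0}"
    by auto
  then show ?thesis using assms unfolding fin_conf_def by (meson finite_Un finite_subset)
qed

lemma fin_conf_vacuum: "phi v = 0 \<Longrightarrow> fin_conf phi (\<lambda>_. v)"
  by (simp add: fin_conf_def)

lemma fin_conf_obtains_vacuum:
  assumes "fin_conf phi a"
  obtains v where "phi v = 0"
proof -
  have "{z. phi (a z) \<noteq> 0} \<noteq> UNIV"
    using assms infinite_UNIV_int by (auto simp: fin_conf_def)
  then show ?thesis using that by auto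
qed

lemma CA_cong:
  assumes "\<And>i. y - int B \<le> i \<Longrightarrow> i \<le> y + int B \<Longrightarrow> a i = b i"
  shows "CA B f a y = CA B f b y"
  unfolding CA_def using assms by (auto intro!: arg_cong[where f = f])

lemma conservedD:
  assumes "conserved B f phi" and "fin_conf phi a"
  shows "fin_conf phi (CA B f a)" and "total phi (CA B f a) = total phi a"
  using assms by (auto simp: conserved_def)

lemma flux_r_eq_charge_greaterThan:
  assumes cons: "conserved B f phi" and fa: "fin_conf phi a"
  shows "flux_r B f phi a z = int (charge phi (CA B f a) {z<..}) - int (charge phi a {z<..})"
  using total_eq_charge_atMost_greaterThan[OF fa, of z]
    total_eq_charge_atMost_greaterThan[OF conservedD(1)[OF cons fa], of z]
    conservedD(2)[OF cons fa]
  unfolding flux_r_def psum_le_eq_charge by linarith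

lemma flux_lr_eq_local_change:
  assumes "fin_conf phi a" and "fin_conf phi (CA B f a)"
  shows "flux_lr B f phi a z = - (int (phi (CA B f a z)) - int (phi (a z)))"
proof -
  have "{z - 1<..z} = {z}" by auto
  then have "charge phi c {..z} = charge phi c {..z - 1} + phi (c z)" if "fin_conf phi c" for c
    using charge_atMost_split[OF that, of "z - 1" z] by (simp add: charge_finite)
  from this[OF assms(1)] this[OF assms(2)] show ?thesis
    unfolding flux_lr_def flux_l_def flux_r_def psum_le_eq_charge by simp
qed

lemma flux_r_cong_left:
  assumes "\<And>y. y \<le> z + int B \<Longrightarrow> a y = b y"
  shows "flux_r B f phi a z = flux_r B f phi b z"
proof -
  have "CA B f a y = CA B f b y" if "y \<le> z" for y
    by (rule CA_cong) (use that assms in auto)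
  then have "charge phi (CA B f a) {..z} = charge phi (CA B f b) {..z}"
    by (intro charge_cong) simp
  moreover have "charge phi a {..z} = charge phi b {..z}"
    by (intro charge_cong) (simp add: assms)
  ultimately show ?thesis by (simp add: flux_r_def psum_le_eq_charge)
qed

lemma flux_r_cong_right:
  assumes cons: "conserved B f phi" and "fin_conf phi a" "fin_conf phi b"
    and agree: "\<And>y. z - int B \<le> y \<Longrightarrow> a y = b y"
  shows "flux_r B f phi a z = flux_r B f phi b z"
proof -
  have "CA B f a y = CA B f b y" if "z < y" for y
    by (rule CA_cong) (use that agree in auto)
  then have "charge phi (CA B f a) {z<..} = charge phi (CA B f b) {z<..}"
    by (intro charge_cong) simp
  moreover have "charge phi a {z<..} = charge phi b {z<..}"
    by (intro charge_cong) (simp add: agree)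
  ultimately show ?thesis using assms by (simp add: flux_r_eq_charge_greaterThan)
qed

lemma flux_r_local:
  assumes cons: "conserved B f phi" and fa: "fin_conf phi a" and fb: "fin_conf phi b"
    and window: "\<And>y. y \<in> {z - int B .. z + int B} \<Longrightarrow> b y = a y"
  shows "flux_r B f phi b z = flux_r B f phi a z"
proof -
  define c where "c = (\<lambda>y. if y \<in> {..z + int B} then a y else b y)"
  have fc: "fin_conf phi c" unfolding c_def by (rule fin_conf_patch[OF fa fb])
  have "flux_r B f phi a z = flux_r B f phi c z"
    by (rule flux_r_cong_left) (simp add: c_def)
  also have "\<dots> = flux_r B f phi b z"
    by (rule flux_r_cong_right[OF cons fc fb]) (use window in \<open>auto simp: c_def\<close>)
  finally show ?thesis by simp
qed

lemma CA_charge_greaterThan_le: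
  assumes cons: "conserved B f phi" and fa: "fin_conf phi a"
  shows "charge phi (CA B f a) {z + int B<..} \<le> charge phi a {z<..}"
proof -
  obtain v where v: "phi v = 0" using fin_conf_obtains_vacuum[OF fa] .
  define d where "d = (\<lambda>y. if y \<in> {z<..} then a y else v)"
  have fd: "fin_conf phi d" unfolding d_def by (intro fin_conf_patch fa fin_conf_vacuum v)
  have "charge phi (CA B f a) {z + int B<..} = charge phi (CA B f d) {z + int B<..}"
    by (intro charge_cong CA_cong) (auto simp: d_def)
  also have "\<dots> \<le> total phi (CA B f d)"
    unfolding total_eq_charge by (intro charge_mono conservedD[OF cons fd]) simp
  also have "\<dots> = total phi d"
    by (rule conservedD(2)[OF cons fd])
  also have "\<dots> = charge phi d {z<..}"
    unfolding total_eq_charge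
    by (subst charge_eq_Int_if_vacuum[of UNIV "{z<..}" phi d]) (auto simp: d_def v)
  also have "\<dots> = charge phi a {z<..}"
    by (intro charge_cong) (simp add: d_def)
  finally show ?thesis .
qed

lemma CA_charge_atMost_le:
  assumes cons: "conserved B f phi" and fa: "fin_conf phi a"
  shows "charge phi (CA B f a) {..z - int B} \<le> charge phi a {..z}"
proof -
  obtain v where v: "phi v = 0" using fin_conf_obtains_vacuum[OF fa] .
  define d where "d = (\<lambda>y. if y \<in> {..z} then a y else v)"
  have fd: "fin_conf phi d" unfolding d_def by (intro fin_conf_patch fa fin_conf_vacuum v)
  have "charge phi (CA B f a) {..z - int B} = charge phi (CA B f d) {..z - int B}"
    by (intro charge_cong CA_cong) (auto simp: d_def)
  also have "\<dots> \<le> total phi (CA B f d)"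
    unfolding total_eq_charge by (intro charge_mono conservedD[OF cons fd]) simp
  also have "\<dots> = total phi d"
    by (rule conservedD(2)[OF cons fd])
  also have "\<dots> = charge phi d {..z}"
    unfolding total_eq_charge
    by (subst charge_eq_Int_if_vacuum[of UNIV "{..z}" phi d]) (auto simp: d_def v)
  also have "\<dots> = charge phi a {..z}"
    by (intro charge_cong) (simp add: d_def)
  finally show ?thesis .
qed

lemma flux_r_le_charge_before:
  assumes cons: "conserved B f phi" and fa: "fin_conf phi a"
  shows "flux_r B f phi a z \<le> int (\<Sum>y \<in> {z - int B .. z}. phi (a y))"
proof -
  obtain v where v: "phi v = 0" using fin_conf_obtains_vacuum[OF fa] .
  define c where "c = (\<lambda>y. if y \<in> {z - int B..} then a y else v)"
  have fc: "fin_conf phi c" unfolding c_def by (intro fin_conf_patch fa fin_conf_vacuum v)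
  have "flux_r B f phi a z = flux_r B f phi c z"
    by (rule flux_r_cong_right[OF cons fa fc]) (simp add: c_def)
  also have "\<dots> \<le> int (charge phi c {..z})"
    by (simp add: flux_r_def psum_le_eq_charge)
  also have "charge phi c {..z} = charge phi c ({..z} \<inter> {z - int B..})"
    by (rule charge_eq_Int_if_vacuum) (simp add: c_def v)
  also have "{..z} \<inter> {z - int B..} = {z - int B .. z}" by auto
  also have "charge phi c {z - int B .. z} = (\<Sum>y \<in> {z - int B .. z}. phi (a y))"
    by (simp add: charge_finite c_def)
  finally show ?thesis .
qed

lemma flux_l_le_charge_before:
  assumes cons: "conserved B f phi" and fa: "fin_conf phi a"
  shows "flux_l B f phi a z \<le> int (\<Sum>y \<in> {z .. z + int B}. phi (a y))"
proof -
  obtain v where v: "phi v = 0" using fin_conf_obtains_vacuum[OF fa] .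
  define c where "c = (\<lambda>y. if y \<in> {..z + int B} then a y else v)"
  have fc: "fin_conf phi c" unfolding c_def by (intro fin_conf_patch fa fin_conf_vacuum v)
  have "flux_l B f phi a z = - flux_r B f phi c (z - 1)"
    unfolding flux_l_def by (subst flux_r_cong_left[of "z - 1" B a c]) (auto simp: c_def)
  also have "\<dots> \<le> int (charge phi c {z - 1<..})"
    by (simp add: flux_r_eq_charge_greaterThan[OF cons fc])
  also have "charge phi c {z - 1<..} = charge phi c ({z - 1<..} \<inter> {..z + int B})"
    by (rule charge_eq_Int_if_vacuum) (simp add: c_def v)
  also have "{z - 1<..} \<inter> {..z + int B} = {z .. z + int B}" by auto
  also have "charge phi c {z .. z + int B} = (\<Sum>y \<in> {z .. z + int B}. phi (a y))"
    by (simp add: charge_finite c_def)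
  finally show ?thesis .
qed

lemma flux_r_le_charge_after:
  assumes cons: "conserved B f phi" and fa: "fin_conf phi a"
  shows "flux_r B f phi a z \<le> int (\<Sum>y \<in> {z .. z + int B}. phi (CA B f a y))"
proof -
  have fa': "fin_conf phi (CA B f a)" using conservedD(1)[OF cons fa] .
  have "flux_r B f phi a z \<le> int (charge phi (CA B f a) {z<..z + int B})"
    using charge_greaterThan_split[OF fa', of z "z + int B"] CA_charge_greaterThan_le[OF cons fa, of z]
    by (simp add: flux_r_eq_charge_greaterThan[OF cons fa])
  also have "\<dots> \<le> int (charge phi (CA B f a) {z .. z + int B})"
    by (simp add: charge_mono[OF fa'] subset_eq)
  finally show ?thesis by (simp add: charge_finite)
qed

lemma flux_l_le_charge_after:
  assumes cons: "conserved B f phi" and fa: "fin_conf phi a"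
  shows "flux_l B f phi a z \<le> int (\<Sum>y \<in> {z - int B .. z}. phi (CA B f a y))"
proof -
  have fa': "fin_conf phi (CA B f a)" using conservedD(1)[OF cons fa] .
  have "flux_l B f phi a z \<le> int (charge phi (CA B f a) {z - 1 - int B<..z - 1})"
    using charge_atMost_split[OF fa', of "z - 1 - int B" "z - 1"] CA_charge_atMost_le[OF cons fa, of "z - 1"]
    by (simp add: flux_l_def flux_r_def psum_le_eq_charge)
  also have "\<dots> \<le> int (charge phi (CA B f a) {z - int B .. z})"
    by (simp add: charge_mono[OF fa'] subset_eq)
  finally show ?thesis by (simp add: charge_finite)
qed

theorem proposition12:
  fixes B :: nat and f :: "'a::finite list \<Rightarrow> 'a" and phi :: "'a \<Rightarrow> nat"
    and a :: "int \<Rightarrow> 'a"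
  assumes cons: "conserved B f phi"
    and fa: "fin_conf phi a"
  defines "a' \<equiv> CA B f a"
  shows "(\<forall>z. flux_lr B f phi a z = - (int (phi (a' z)) - int (phi (a z))))
    \<and> (\<forall>z b. fin_conf phi b \<longrightarrow> (\<forall>y \<in> {z - int B .. z + int B}. b y = a y)
          \<longrightarrow> flux_r B f phi b z = flux_r B f phi a z)
    \<and> (\<forall>z. flux_r B f phi a z \<le> int (\<Sum>y \<in> {z - int B .. z}. phi (a y))
         \<and> flux_r B f phi a z \<le> int (\<Sum>y \<in> {z .. z + int B}. phi (a' y))
         \<and> flux_l B f phi a z \<le> int (\<Sum>y \<in> {z .. z + int B}. phi (a y))
         \<and> flux_l B f phi a z \<le> int (\<Sum>y \<in> {z - int B .. z}. phi (a' y)))"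
  unfolding a'_def
  using flux_lr_eq_local_change[OF fa conservedD(1)[OF cons fa]] flux_r_local[OF cons fa]
    flux_r_le_charge_before[OF cons fa] flux_r_le_charge_after[OF cons fa]
    flux_l_le_charge_before[OF cons fa] flux_l_le_charge_after[OF cons fa]
  by blast

end
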